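(* Let $n$ be a composite integer and let $\ell$ be the smallest prime factor of $n$. Then $C_q(n)=0$ if and only if $(q,n)=(2,9)$. If $(q,n)\neq(2,9)$, then $C_q(n)=1$ if and only if $(q,n)=(2,4)$, and moreover $$C_q(n)\ge \frac{q^n}{(2n)^{\ell}}.$$
   Context: $\mathbb{F}_q$ is the finite field with $q$ elements. A finite ring $S$ is a Carmichael ring if $S$ is not a field and $a^{|S|}=a$ for every $a\in S$. A polynomial $f\in\mathbb{F}_q[t]$ is a Carmichael polynomial if $\mathbb{F}_q[t]/(f)$ is a Carmichael ring. $C_q(n)$ denotes the number of monic Carmichael polynomials in $\mathbb{F}_q[t]$ of degree $n$. *)

theory Defs
  imports "HOL-Computational_Algebra.Polynomial" "HOL-Computational_Algebra.Primes"
begin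

text \<open>The quotient ring F_q[t]/(f) is modelled by residues modulo f.
  Its elements are represented by the polynomials r with r mod f = r.\<close>

definition quot_card :: "'a::field poly \<Rightarrow> nat" where
  "quot_card f = card {r :: 'a poly. r mod f = r}"

text \<open>F[t]/(f) is a field: it is a nonzero ring (1 is not 0 mod f), and every
  nonzero residue class has an inverse.\<close>

definition quot_is_field :: "'a::field poly \<Rightarrow> bool" where
  "quot_is_field f \<longleftrightarrow> \<not> f dvd 1 \<and> (\<forall>g. \<not> f dvd g \<longrightarrow> (\<exists>h. f dvd g * h - 1))"

definition carmichael_poly :: "'a::field poly \<Rightarrow> bool" where
  "carmichael_poly f \<longleftrightarrow> \<not> quot_is_field f \<and> (\<forall>g. f dvd (g ^ quot_card f - g))"

definition carmichael_count :: "'a::{finite,field} itself \<Rightarrow> nat \<Rightarrow> nat" where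
  "carmichael_count _ n =
     card {f :: 'a poly. lead_coeff f = 1 \<and> degree f = n \<and> carmichael_poly f}"

end

(*
  For monic f of degree n, the ring F_q[t]/(f) has q^n elements, it is a field iff f is
  irreducible, and a^(q^n) = a holds in it for all a iff f divides t^(q^n) - t.  This
  polynomial is squarefree (its derivative is -1) and is the product of all monic
  irreducibles whose degree divides n.  Hence monic Carmichael polynomials of degree n
  correspond to sets of monic irreducibles of proper-divisor degrees and total degree n.

  Write n = l m with l the least prime factor, so l <= m.  Any l distinct irreducibles of
  degree m form such a set, so C_q(n) >= binom(I_m, l) >= (I_m / l)^l, where I_m is the
  number of monic irreducibles of degree m.  Gauss' formula sum_(d | m) d I_d = q^m gives
  q^m <= 2 m I_m, which yields the bound.  When I_m <= l, the same formula leaves only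
  q = 2 and n in {4, 6, 9}, which are counted directly.
*)
theory Submission
  imports Defs "HOL-Library.Cardinality" "HOL-Computational_Algebra.Polynomial_Factorial"
    "HOL-Computational_Algebra.Squarefree" "HOL-Algebra.Multiplicative_Group" "HOL-Algebra.Sylow"
begin

lemma two_le_card_field: "card (UNIV :: 'a::{finite,field} set) \<ge> 2"
proof -
  have "card {0::'a, 1} \<le> CARD('a)" by (rule card_mono) auto
  then show ?thesis by simp
qed

definition additive_group :: "'a::ab_group_add monoid" where
  "additive_group = \<lparr>carrier = UNIV, mult = (+), one = 0\<rparr>"

lemma group_additive_group: "group (additive_group :: 'a::ab_group_add monoid)"
  unfolding additive_group_def
  by (rule groupI) (auto simp: add.assoc intro: exI[of _ "- x" for x])

lemma pow_additive_group:
  "x [^]\<^bsub>additive_group\<lparr>carrier := H\<rparr>\<^esub> (n::nat) = of_nat n * (x :: 'a::ring_1)"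
  by (induct n) (simp_all add: additive_group_def algebra_simps)

text \<open>Cauchy's theorem, in the form of a Sylow subgroup of order r, yields an element of
  additive order r.\<close>
lemma prime_dvd_card_field_eq_CHAR:
  assumes r: "prime r" "r dvd card (UNIV :: 'a::{finite,field} set)"
  shows "r = CHAR('a)"
proof -
  let ?G = "additive_group :: 'a monoid"
  have "order ?G = r ^ 1 * (CARD('a) div r)"
    using r by (simp add: order_def additive_group_def)
  from sylow_thm[OF r(1) group_additive_group this]
  obtain H where H: "subgroup H ?G" "card H = r"
    by (auto simp: additive_group_def)
  have "H \<noteq> {0}" using H(2) r(1) by (auto simp: prime_nat_iff)
  moreover have "0 \<in> H" using subgroup.one_closed[OF H(1)] by (simp add: additive_group_def)
  ultimately obtain h where h: "h \<in> H" "h \<noteq> 0" by blast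
  have "group (?G\<lparr>carrier := H\<rparr>)"
    by (rule subgroup.subgroup_is_group[OF H(1) group_additive_group])
  from group.pow_order_eq_1[OF this] h(1) H(2)
  have "of_nat r * h = 0"
    by (simp add: order_def pow_additive_group) (simp add: additive_group_def)
  with h(2) have "CHAR('a) dvd r" by (simp add: of_nat_eq_0_iff_char_dvd)
  moreover have "prime CHAR('a)" by (simp add: prime_CHAR_semidom finite_imp_CHAR_pos)
  ultimately show ?thesis using primes_dvd_imp_eq r(1) by blast
qed

lemma card_field_eq_CHAR_power: "\<exists>k>0. card (UNIV :: 'a::{finite,field} set) = CHAR('a) ^ k"
proof -
  have "CARD('a) \<noteq> 1" using two_le_card_field[where 'a='a] by simp
  then obtain p where "prime p" "p dvd CARD('a)" using prime_factor_nat by blast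
  then have "CHAR('a) \<in> prime_factors CARD('a)"
    using prime_dvd_card_field_eq_CHAR[of p] by (auto simp: in_prime_factors_iff)
  moreover have "prime_factors CARD('a) \<subseteq> {CHAR('a)}"
    using prime_dvd_card_field_eq_CHAR by (auto simp: in_prime_factors_iff)
  ultimately have factors: "prime_factors CARD('a) = {CHAR('a)}" by blast
  then have "CARD('a) = CHAR('a) ^ multiplicity CHAR('a) CARD('a)"
    using prime_factorization_nat[of "CARD('a)"] by simp
  moreover have "multiplicity CHAR('a) CARD('a) > 0"
    using factors by (auto simp: prime_factors_multiplicity)
  ultimately show ?thesis by blast
qed

lemma of_nat_card_field [simp]: "of_nat CARD('a) = (0::'a::{finite,field})"
proof -
  obtain k where "k > 0" "CARD('a) = CHAR('a) ^ k" using card_field_eq_CHAR_power by blast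
  then show ?thesis by (simp add: of_nat_eq_0_iff_char_dvd)
qed

lemma freshmans_dream_card_power:
  fixes x y :: "'a::{finite,field} poly"
  shows "(x + y) ^ (CARD('a) ^ k) = x ^ (CARD('a) ^ k) + y ^ (CARD('a) ^ k)"
proof -
  obtain e where "CARD('a) = CHAR('a) ^ e" using card_field_eq_CHAR_power by blast
  then have "CARD('a) ^ k = CHAR('a poly) ^ (e * k)" by (simp add: power_mult)
  moreover have "prime CHAR('a poly)" by (simp add: prime_CHAR_semidom finite_imp_CHAR_pos)
  ultimately show ?thesis by (simp add: freshmans_dream')
qed

lemma bij_betw_Poly_degree_less:
  assumes "n > 0"
  shows "bij_betw Poly {xs. length xs = n} {p :: 'a::zero poly. degree p < n}"
proof (rule bij_betw_byWitness[where f' = "\<lambda>p. map (poly.coeff p) [0..<n]"])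
  show "\<forall>xs\<in>{xs. length xs = n}. map (poly.coeff (Poly xs)) [0..<n] = xs"
    by (auto intro: nth_equalityI simp: nth_default_def)
  show "\<forall>p\<in>{p. degree p < n}. Poly (map (poly.coeff p) [0..<n]) = p"
    by (auto intro!: poly_eqI simp: nth_default_def coeff_eq_0)
  have "degree (Poly xs) < n" if "length xs = n" for xs
  proof -
    have "degree (Poly xs) \<le> n - 1"
      by (rule degree_le) (auto simp: nth_default_def that)
    then show ?thesis using assms by linarith
  qed
  then show "Poly ` {xs. length xs = n} \<subseteq> {p. degree p < n}"
    by auto
  show "(\<lambda>p. map (poly.coeff p) [0..<n]) ` {p. degree p < n} \<subseteq> {xs. length xs = n}"
    by auto
qed

lemma finite_degree_less: "finite {p :: 'a::{finite,zero} poly. degree p < n}"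
proof (cases "n = 0")
  case False
  then show ?thesis
    using bij_betw_finite[OF bij_betw_Poly_degree_less[where 'a='a]] finite_lists_length_eq[of "UNIV :: 'a set" n]
    by simp
qed simp

lemma card_degree_less:
  assumes "n > 0"
  shows "card {p :: 'a::{finite,zero} poly. degree p < n} = CARD('a) ^ n"
  using bij_betw_same_card[OF bij_betw_Poly_degree_less[OF assms, where 'a='a]]
    card_lists_length_eq[of "UNIV :: 'a set" n] by simp

lemma degree_mod_less_degree:
  fixes f r :: "'a::field poly"
  assumes "degree f > 0"
  shows "degree (r mod f) < degree f"
proof -
  have "f \<noteq> 0" using assms by auto
  then show ?thesis using assms degree_mod_less'[of f r] by (cases "r mod f = 0") auto
qed

lemma mod_eq_self_iff_degree_less:
  fixes f r :: "'a::field poly"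
  assumes "degree f > 0"
  shows "r mod f = r \<longleftrightarrow> degree r < degree f"
  using degree_mod_less_degree[OF assms, of r] by (auto simp: mod_poly_less)

lemma quot_card_eq:
  fixes f :: "'a::{finite,field} poly"
  assumes "degree f > 0"
  shows "quot_card f = CARD('a) ^ degree f"
  using assms by (simp add: quot_card_def mod_eq_self_iff_degree_less card_degree_less)

lemma irreducible_imp_degree_pos:
  fixes f :: "'a::field poly"
  assumes "irreducible f"
  shows "degree f > 0"
proof -
  have "f \<noteq> 0" using assms by auto
  then show ?thesis using irreducible_not_unit[OF assms] by (simp add: is_unit_iff_degree)
qed

text \<open>Multiplication by g permutes the residues modulo the prime f, so it hits 1.\<close>
lemma irreducible_imp_inverse_mod:
  fixes f g :: "'a::{finite,field} poly"
  assumes f: "irreducible f" and g: "\<not> f dvd g"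
  shows "\<exists>h. f dvd g * h - 1"
proof -
  let ?R = "{r. degree r < degree f}"
  have "degree f > 0" using f by (rule irreducible_imp_degree_pos)
  then have mod_in: "x mod f \<in> ?R" for x by (simp add: degree_mod_less_degree)
  have "inj_on (\<lambda>r. g * r mod f) ?R"
  proof (rule inj_onI)
    fix a b assume "a \<in> ?R" "b \<in> ?R" "g * a mod f = g * b mod f"
    then have "f dvd g * (a - b)" by (simp add: mod_eq_dvd_iff right_diff_distrib)
    then have "f dvd a - b"
      using g field_poly_irreducible_imp_prime[OF f] by (simp add: prime_elem_dvd_mult_iff)
    moreover have "degree (a - b) < degree f"
      using \<open>a \<in> ?R\<close> \<open>b \<in> ?R\<close> degree_diff_le_max[of a b] by simp
    ultimately have "a - b = 0" using dvd_imp_degree_le[of f "a - b"] by fastforce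
    then show "a = b" by simp
  qed
  moreover have "(\<lambda>r. g * r mod f) ` ?R \<subseteq> ?R" using mod_in by blast
  ultimately have "(\<lambda>r. g * r mod f) ` ?R = ?R"
    using endo_inj_surj[OF finite_degree_less] by blast
  moreover have "1 \<in> ?R" using \<open>degree f > 0\<close> by simp
  ultimately have "1 \<in> (\<lambda>r. g * r mod f) ` ?R" by simp
  then obtain h where "1 = g * h mod f" by blast
  then have "g * h mod f = 1 mod f" using \<open>degree f > 0\<close> by (simp add: mod_poly_less)
  then show ?thesis by (auto simp: mod_eq_dvd_iff)
qed

lemma quot_is_field_iff_irreducible:
  fixes f :: "'a::{finite,field} poly"
  assumes "degree f > 0"
  shows "quot_is_field f \<longleftrightarrow> irreducible f"
proof
  assume field: "quot_is_field f"
  show "irreducible f"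
  proof (rule irreducibleI)
    fix a b assume f: "f = a * b"
    show "is_unit a \<or> is_unit b"
    proof (rule ccontr)
      assume "\<not> (is_unit a \<or> is_unit b)"
      moreover have "a \<noteq> 0" "b \<noteq> 0" using f assms by auto
      ultimately have "degree b > 0" by (simp add: is_unit_iff_degree)
      then have "degree a < degree f"
        using f \<open>a \<noteq> 0\<close> \<open>b \<noteq> 0\<close> by (simp add: degree_mult_eq)
      then have "\<not> f dvd a"
        using \<open>a \<noteq> 0\<close> by (auto dest: dvd_imp_degree_le)
      then obtain h where "f dvd a * h - 1" using field by (auto simp: quot_is_field_def)
      then have "a dvd a * h - 1" using f dvd_mult_left by blast
      with dvd_triv_left[of a h] have "a dvd a * h - (a * h - 1)" by (rule dvd_diff)
      then have "a dvd 1" by simp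
      with \<open>\<not> (is_unit a \<or> is_unit b)\<close> show False by simp
    qed
  qed (use assms field in \<open>auto simp: quot_is_field_def\<close>)
next
  assume "irreducible f"
  then show "quot_is_field f"
    by (auto simp: quot_is_field_def irreducible_not_unit irreducible_imp_inverse_mod)
qed

definition residue_ring :: "'a::field poly \<Rightarrow> 'a poly ring" where
  "residue_ring f = \<lparr>carrier = {r. degree r < degree f}, monoid.mult = (\<lambda>x y. x * y mod f),
     one = 1, zero = 0, add = (\<lambda>x y. (x + y) mod f)\<rparr>"

lemma residue_ring_simps [simp]:
  "\<zero>\<^bsub>residue_ring f\<^esub> = 0" "\<one>\<^bsub>residue_ring f\<^esub> = 1"
  "x \<otimes>\<^bsub>residue_ring f\<^esub> y = x * y mod f" "x \<oplus>\<^bsub>residue_ring f\<^esub> y = (x + y) mod f"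
  by (simp_all add: residue_ring_def)

lemma mod_in_carrier_residue_ring:
  fixes f x :: "'a::field poly"
  assumes "degree f > 0"
  shows "x mod f \<in> carrier (residue_ring f)"
  using assms by (simp add: residue_ring_def degree_mod_less_degree)

lemma cring_residue_ring:
  fixes f :: "'a::field poly"
  assumes f: "degree f > 0"
  shows "cring (residue_ring f)"
proof (rule cringI)
  note closed = mod_in_carrier_residue_ring[OF f]
  show "abelian_group (residue_ring f)"
  proof (rule abelian_groupI)
    fix x assume "x \<in> carrier (residue_ring f)"
    then show "\<exists>y\<in>carrier (residue_ring f). y \<oplus>\<^bsub>residue_ring f\<^esub> x = \<zero>\<^bsub>residue_ring f\<^esub>"
      by (intro bexI[of _ "- x"]) (auto simp: residue_ring_def)
  qed (use f closed in
      \<open>auto simp: residue_ring_def mod_poly_less mod_add_left_eq mod_add_right_eq add_ac\<close>)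
  show "comm_monoid (residue_ring f)"
    by (rule comm_monoidI) (use f closed in
      \<open>auto simp: residue_ring_def mod_poly_less mod_mult_left_eq mod_mult_right_eq mult_ac\<close>)
qed (auto simp: residue_ring_def mod_mult_left_eq mod_add_eq distrib_right)

lemma pow_residue_ring:
  fixes f x :: "'a::field poly"
  assumes "degree f > 0"
  shows "x [^]\<^bsub>residue_ring f\<^esub> (n::nat) = x ^ n mod f"
  by (induction n)
    (use assms in \<open>simp_all add: residue_ring_def mod_poly_less mod_mult_right_eq mult_ac\<close>)

lemma card_carrier_residue_ring:
  fixes f :: "'a::{finite,field} poly"
  assumes "degree f > 0"
  shows "card (carrier (residue_ring f)) = CARD('a) ^ degree f"
  using assms by (simp add: residue_ring_def card_degree_less)

context
  fixes P :: "'a::{finite,field} poly"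
  assumes P: "irreducible P"
begin

lemma field_residue_ring: "field (residue_ring P)"
proof -
  have deg: "degree P > 0" by (rule irreducible_imp_degree_pos[OF P])
  interpret cring "residue_ring P" by (rule cring_residue_ring[OF deg])
  show ?thesis
  proof (rule cring_fieldI2)
    fix x assume x: "x \<in> carrier (residue_ring P)" "x \<noteq> \<zero>\<^bsub>residue_ring P\<^esub>"
    then have "\<not> P dvd x" by (auto simp: residue_ring_def dest: dvd_imp_degree_le)
    then obtain h where "P dvd x * h - 1" using irreducible_imp_inverse_mod[OF P] by blast
    then have "x * (h mod P) mod P = 1"
      using deg by (simp add: mod_mult_right_eq mod_eq_dvd_iff[symmetric] mod_poly_less)
    then show "\<exists>y\<in>carrier (residue_ring P). x \<otimes>\<^bsub>residue_ring P\<^esub> y = \<one>\<^bsub>residue_ring P\<^esub>"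
      using mod_in_carrier_residue_ring[OF deg] by (auto simp: residue_ring_def)
  qed (simp add: residue_ring_def)
qed

lemma card_units_residue_ring:
  "card (carrier (residue_ring P) - {0}) = CARD('a) ^ degree P - 1"
proof -
  have "degree P > 0" by (rule irreducible_imp_degree_pos[OF P])
  moreover have "finite (carrier (residue_ring P))" "0 \<in> carrier (residue_ring P)"
    using \<open>degree P > 0\<close> by (simp_all add: residue_ring_def finite_degree_less)
  ultimately show ?thesis
    by (simp add: card_Diff_singleton card_carrier_residue_ring)
qed

lemma dvd_power_card_power_degree: "P dvd g ^ (CARD('a) ^ degree P) - g"
proof -
  have deg: "degree P > 0" by (rule irreducible_imp_degree_pos[OF P])
  let ?N = "CARD('a) ^ degree P"
  have N: "g * g ^ (?N - 1) = g ^ ?N" by (simp flip: power_Suc)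
  show ?thesis
  proof (cases "P dvd g")
    case True
    then show ?thesis by (simp flip: N)
  next
    case False
    interpret field "residue_ring P" by (rule field_residue_ring)
    have "g mod P \<in> carrier (mult_of (residue_ring P))"
      using False mod_in_carrier_residue_ring[OF deg] by (simp add: dvd_eq_mod_eq_0)
    from group.pow_order_eq_1[OF field_mult_group this]
    have "g ^ (?N - 1) mod P = 1 mod P"
      using deg by (simp add: order_def card_units_residue_ring nat_pow_mult_of
          pow_residue_ring power_mod mod_poly_less)
    then have "P dvd g * (g ^ (?N - 1) - 1)" by (simp add: mod_eq_dvd_iff)
    then show ?thesis by (simp only: right_diff_distrib mult_1_right N)
  qed
qed

text \<open>If \<open>y\<^bsup>q\<^sup>c\<^esup> = y\<close> on the residue field, its \<open>q\<^bsup>d\<^esup> - 1\<close> units are roots of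
  \<open>Y\<^bsup>q\<^sup>c - 1\<^esup> - 1\<close>.\<close>
lemma degree_le_if_dvd_power_card_power:
  assumes c: "c > 0" and fixed: "\<forall>g. P dvd g ^ (CARD('a) ^ c) - g"
  shows "degree P \<le> c"
proof (rule ccontr)
  assume "\<not> degree P \<le> c"
  have deg: "degree P > 0" by (rule irreducible_imp_degree_pos[OF P])
  let ?K = "residue_ring P" and ?M = "CARD('a) ^ c - 1"
  let ?roots = "{x \<in> carrier ?K. x [^]\<^bsub>?K\<^esub> ?M = \<one>\<^bsub>?K\<^esub>}"
  have "CARD('a) ^ c \<ge> CARD('a)" using c by (simp add: self_le_power)
  then have M: "?M \<noteq> 0" using two_le_card_field[where 'a='a] by linarith
  interpret field ?K by (rule field_residue_ring)
  have sub: "carrier (mult_of ?K) \<subseteq> ?roots"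
  proof
    fix x assume x: "x \<in> carrier (mult_of ?K)"
    then have "\<not> P dvd x" by (auto simp: residue_ring_def dest: dvd_imp_degree_le)
    have "x * x ^ ?M = x ^ (CARD('a) ^ c)"
      using M by (simp flip: power_Suc)
    then have "P dvd x * (x ^ ?M - 1)"
      using fixed by (simp add: right_diff_distrib)
    then have "P dvd x ^ ?M - 1"
      using \<open>\<not> P dvd x\<close> field_poly_irreducible_imp_prime[OF P] by (simp add: prime_elem_dvd_mult_iff)
    then have "x ^ ?M mod P = 1"
      using deg by (simp add: mod_eq_dvd_iff[symmetric] mod_poly_less)
    then show "x \<in> ?roots" using x by (simp add: pow_residue_ring[OF deg])
  qed
  have fin: "finite (carrier ?K)" by (simp add: residue_ring_def finite_degree_less)
  have "card (carrier (mult_of ?K)) \<le> card ?roots" using fin sub by (intro card_mono) auto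
  also have "\<dots> \<le> ?M" by (rule num_roots_le_deg[OF fin M])
  finally have "CARD('a) ^ degree P - 1 \<le> ?M" by (simp add: card_units_residue_ring)
  moreover have "CARD('a) ^ c < CARD('a) ^ degree P"
    using \<open>\<not> degree P \<le> c\<close> two_le_card_field[where 'a='a] by (simp add: power_strict_increasing)
  ultimately show False using M by arith
qed

end

lemma power_card_field [simp]: "x ^ CARD('a) = (x :: 'a::{finite,field})"
proof -
  have "[:0, 1:] dvd [:x:] ^ (CARD('a) ^ degree [:0, 1 :: 'a:]) - [:x:]"
    by (rule dvd_power_card_power_degree) (simp add: irreducible_linear_field_poly)
  then have "[:0, 1:] dvd [:x ^ CARD('a) - x:]" by (simp add: poly_const_pow)
  then show ?thesis by (auto simp: dvd_iff_poly_eq_0)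
qed

lemma power_card_power_field [simp]: "x ^ (CARD('a) ^ k) = (x :: 'a::{finite,field})"
  by (induction k) (simp_all add: power_mult)

definition frobenius_trivial :: "'a::{finite,field} poly \<Rightarrow> nat \<Rightarrow> bool" where
  "frobenius_trivial f k \<longleftrightarrow> (\<forall>g. f dvd g ^ (CARD('a) ^ k) - g)"

definition frobenius_poly :: "nat \<Rightarrow> 'a::{finite,field} poly" where
  "frobenius_poly k = [:0, 1:] ^ (CARD('a) ^ k) - [:0, 1:]"

text \<open>The map \<open>g \<mapsto> g\<^bsup>q\<^sup>k\<^esup>\<close> is a ring endomorphism fixing the constants, so modulo f
  it is the identity as soon as it fixes t.\<close>
lemma frobenius_trivial_iff_dvd_frobenius_poly:
  fixes f :: "'a::{finite,field} poly"
  shows "frobenius_trivial f k \<longleftrightarrow> f dvd frobenius_poly k"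
proof
  assume t_fixed: "f dvd frobenius_poly k"
  let ?Q = "CARD('a) ^ k"
  have "f dvd g ^ ?Q - g" for g
  proof (induction g rule: pCons_induct)
    case (pCons a h)
    have split: "pCons a h = [:a:] + [:0, 1:] * h" by simp
    have "pCons a h ^ ?Q = [:a:] ^ ?Q + ([:0, 1:] * h) ^ ?Q"
      by (subst split) (rule freshmans_dream_card_power)
    also have "\<dots> = [:a:] + [:0, 1:] ^ ?Q * h ^ ?Q"
      by (simp only: poly_const_pow power_card_power_field power_mult_distrib)
    finally have "pCons a h ^ ?Q - pCons a h = [:0, 1:] ^ ?Q * (h ^ ?Q - h) + frobenius_poly k * h"
      by (subst (2) split) (simp add: frobenius_poly_def algebra_simps)
    then show ?case using pCons.IH t_fixed by (simp add: dvd_add dvd_mult)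
  qed (simp add: zero_power)
  then show "frobenius_trivial f k" by (simp add: frobenius_trivial_def)
qed (simp add: frobenius_trivial_def frobenius_poly_def)

lemma frobenius_trivial_add:
  fixes f :: "'a::{finite,field} poly"
  assumes "frobenius_trivial f a" "frobenius_trivial f b"
  shows "frobenius_trivial f (a + b)"
  unfolding frobenius_trivial_def
proof
  fix g :: "'a poly"
  let ?h = "g ^ (CARD('a) ^ a)"
  have "f dvd (?h ^ (CARD('a) ^ b) - ?h) + (?h - g)"
    using assms by (intro dvd_add) (simp_all add: frobenius_trivial_def)
  then show "f dvd g ^ (CARD('a) ^ (a + b)) - g"
    by (simp add: power_add power_mult)
qed

lemma frobenius_trivial_mult:
  fixes f :: "'a::{finite,field} poly"
  assumes "frobenius_trivial f a"
  shows "frobenius_trivial f (a * k)"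
proof (induction k)
  case 0
  then show ?case by (simp add: frobenius_trivial_def)
next
  case (Suc k)
  then show ?case using frobenius_trivial_add[OF assms] by simp
qed

lemma frobenius_trivial_cancel:
  fixes f :: "'a::{finite,field} poly"
  assumes "frobenius_trivial f a" "frobenius_trivial f (a + b)"
  shows "frobenius_trivial f b"
  unfolding frobenius_trivial_def
proof
  fix g :: "'a poly"
  let ?h = "g ^ (CARD('a) ^ b)"
  have "?h ^ (CARD('a) ^ a) = g ^ (CARD('a) ^ (a + b))"
    by (simp add: power_add mult.commute flip: power_mult)
  moreover have "f dvd g ^ (CARD('a) ^ (a + b)) - g" "f dvd ?h ^ (CARD('a) ^ a) - ?h"
    using assms by (simp_all add: frobenius_trivial_def)
  ultimately have "f dvd (?h ^ (CARD('a) ^ a) - g) - (?h ^ (CARD('a) ^ a) - ?h)"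
    by (metis dvd_diff)
  then show "f dvd ?h - g" by simp
qed

lemma irreducible_frobenius_trivial_iff:
  fixes P :: "'a::{finite,field} poly"
  assumes P: "irreducible P"
  shows "frobenius_trivial P m \<longleftrightarrow> degree P dvd m"
proof -
  have deg: "frobenius_trivial P (degree P)"
    using dvd_power_card_power_degree[OF P] by (simp add: frobenius_trivial_def)
  show ?thesis
  proof
    assume "frobenius_trivial P m"
    moreover have "m = degree P * (m div degree P) + m mod degree P" by simp
    ultimately have rest: "frobenius_trivial P (m mod degree P)"
      using frobenius_trivial_cancel frobenius_trivial_mult[OF deg] by metis
    show "degree P dvd m"
    proof (rule ccontr)
      assume "\<not> degree P dvd m"
      then have "m mod degree P > 0" by (simp add: dvd_eq_mod_eq_0)
      then have "degree P \<le> m mod degree P"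
        using degree_le_if_dvd_power_card_power[OF P] rest by (simp add: frobenius_trivial_def)
      moreover have "m mod degree P < degree P" using irreducible_imp_degree_pos[OF P] by simp
      ultimately show False by simp
    qed
  next
    assume "degree P dvd m"
    then show "frobenius_trivial P m" using frobenius_trivial_mult[OF deg] by auto
  qed
qed

lemma
  assumes "k > 0"
  shows degree_frobenius_poly: "degree (frobenius_poly k :: 'a::{finite,field} poly) = CARD('a) ^ k"
    and lead_coeff_frobenius_poly: "lead_coeff (frobenius_poly k :: 'a poly) = 1"
proof -
  have "CARD('a) ^ k \<ge> CARD('a)" using assms by (simp add: self_le_power)
  then have less: "degree (- [:0, 1 :: 'a:]) < degree ([:0, 1 :: 'a:] ^ (CARD('a) ^ k))"
    using two_le_card_field[where 'a='a] by (simp add: degree_linear_power)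
  have eq: "frobenius_poly k = - [:0, 1 :: 'a:] + [:0, 1:] ^ (CARD('a) ^ k)"
    by (simp add: frobenius_poly_def)
  show "degree (frobenius_poly k :: 'a poly) = CARD('a) ^ k"
    unfolding eq using less by (simp only: degree_add_eq_right degree_linear_power)
  show "lead_coeff (frobenius_poly k :: 'a poly) = 1"
    unfolding eq lead_coeff_add_le[OF less] by (simp add: lead_coeff_power)
qed

text \<open>The derivative of \<open>t\<^bsup>q\<^sup>k\<^esup> - t\<close> is the unit -1, as q vanishes in the field.\<close>
lemma squarefree_frobenius_poly:
  assumes "k > 0"
  shows "squarefree (frobenius_poly k :: 'a::{finite,field} poly)"
proof (rule squarefreeI)
  fix p :: "'a poly" assume "p ^ 2 dvd frobenius_poly k"
  then obtain r where "frobenius_poly k = p ^ 2 * r" by (rule dvdE)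
  then have r: "frobenius_poly k = p * (p * r)" by (simp add: power2_eq_square mult.assoc)
  have "pderiv (frobenius_poly k :: 'a poly) = -1"
    using assms by (simp add: frobenius_poly_def pderiv_diff pderiv_power pderiv_pCons of_nat_power zero_power one_pCons)
  moreover have "p dvd pderiv (frobenius_poly k)"
    unfolding r pderiv_mult by (simp add: dvd_add)
  ultimately show "is_unit p" by simp
qed

definition monic_irreducible :: "'a::field poly \<Rightarrow> bool" where
  "monic_irreducible p \<longleftrightarrow> lead_coeff p = 1 \<and> irreducible p"

lemma ex_monic_irreducible_dvd:
  fixes f :: "'a::field poly"
  assumes "degree f > 0"
  shows "\<exists>p. monic_irreducible p \<and> p dvd f"
  using assms
proof (induction "degree f" arbitrary: f rule: less_induct)
  case less
  have "f \<noteq> 0" using less.prems by auto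
  then have "\<not> is_unit f" using less.prems by (simp add: is_unit_iff_degree)
  show ?case
  proof (cases "irreducible f")
    case True
    let ?c = "inverse (lead_coeff f)"
    have "is_unit [:?c:]" using \<open>f \<noteq> 0\<close> by (simp add: is_unit_const_poly_iff dvd_field_iff)
    then have "irreducible ([:?c:] * f)" using True irreducible_mult_unit_left by blast
    moreover have "[:?c:] * f dvd f" using \<open>f \<noteq> 0\<close> by (simp add: smult_dvd_iff)
    ultimately show ?thesis
      using \<open>f \<noteq> 0\<close> by (intro exI[of _ "[:?c:] * f"]) (simp add: monic_irreducible_def lead_coeff_mult)
  next
    case False
    then obtain a b where f: "f = a * b" "\<not> is_unit a" "\<not> is_unit b"
      using \<open>f \<noteq> 0\<close> \<open>\<not> is_unit f\<close> unfolding irreducible_def by blast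
    then have "a \<noteq> 0" "b \<noteq> 0" using \<open>f \<noteq> 0\<close> by auto
    then have "degree a > 0" "degree b > 0" using f by (simp_all add: is_unit_iff_degree)
    then have "degree a < degree f" using f \<open>a \<noteq> 0\<close> \<open>b \<noteq> 0\<close> by (simp add: degree_mult_eq)
    with less.hyps \<open>degree a > 0\<close> obtain p where "monic_irreducible p" "p dvd a" by blast
    then show ?thesis using f by auto
  qed
qed

lemma monic_dvd_imp_eq_if_degree_le:
  fixes p q :: "'a::field poly"
  assumes "lead_coeff p = 1" "lead_coeff q = 1" "p dvd q" "degree q \<le> degree p"
  shows "p = q"
proof -
  obtain r where r: "q = p * r" using \<open>p dvd q\<close> by (rule dvdE)
  have "p \<noteq> 0" "r \<noteq> 0" using assms(1,2) r by auto
  then have "degree r = 0" using assms(4) r by (simp add: degree_mult_eq)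
  then obtain c where "r = [:c:]" by (rule degree_eq_zeroE)
  have "lead_coeff q = lead_coeff p * lead_coeff r" using r by (simp only: lead_coeff_mult)
  with assms(1,2) \<open>r = [:c:]\<close> have "r = 1" by (simp add: one_pCons)
  with r show ?thesis by simp
qed

lemma monic_irreducible_dvd_imp_eq:
  fixes p q :: "'a::field poly"
  assumes p: "monic_irreducible p" and q: "monic_irreducible q" and "p dvd q"
  shows "p = q"
proof (rule monic_dvd_imp_eq_if_degree_le)
  have "\<not> is_unit p" using p by (simp add: monic_irreducible_def irreducible_not_unit)
  then have "q dvd p" using q irreducibleD'[OF _ \<open>p dvd q\<close>] by (auto simp: monic_irreducible_def)
  then show "degree q \<le> degree p"
    using p by (intro dvd_imp_degree_le) (auto simp: monic_irreducible_def)
qed (use assms in \<open>simp_all add: monic_irreducible_def\<close>)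

lemma monic_irreducible_dvd_prod_iff:
  fixes p :: "'a::field poly"
  assumes T: "finite T" "\<forall>q\<in>T. monic_irreducible q" and p: "monic_irreducible p"
  shows "p dvd \<Prod>T \<longleftrightarrow> p \<in> T"
proof
  have prime: "prime_elem p"
    using p by (simp add: monic_irreducible_def field_poly_irreducible_imp_prime)
  show "p dvd \<Prod>T \<Longrightarrow> p \<in> T"
    using T
  proof (induction T rule: finite_induct)
    case empty
    then show ?case using prime by (simp add: prime_elem_not_unit)
  next
    case (insert q T)
    then have "p dvd q \<or> p dvd \<Prod>T" using prime by (simp add: prime_elem_dvd_mult_iff)
    moreover have "p dvd q \<Longrightarrow> p = q"
      using insert.prems(2) p by (simp add: monic_irreducible_dvd_imp_eq)
    ultimately show ?case using insert.IH insert.prems by blast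
  qed
next
  show "p \<in> T \<Longrightarrow> p dvd \<Prod>T" using T(1) by (rule dvd_prodI)
qed

lemma inj_on_prod_monic_irreducibles:
  "inj_on Prod {T :: 'a::field poly set. finite T \<and> (\<forall>p\<in>T. monic_irreducible p)}"
proof (rule inj_onI)
  fix S T :: "'a poly set"
  assume S: "S \<in> {T. finite T \<and> (\<forall>p\<in>T. monic_irreducible p)}"
    and T: "T \<in> {T. finite T \<and> (\<forall>p\<in>T. monic_irreducible p)}"
    and eq: "\<Prod>S = \<Prod>T"
  have "p \<in> S \<longleftrightarrow> p \<in> T" if "monic_irreducible p" for p
    using monic_irreducible_dvd_prod_iff[of S p] monic_irreducible_dvd_prod_iff[of T p] S T eq that
    by simp
  then show "S = T" using S T by blast
qed

lemma prod_dvd_if_monic_irreducibles_dvd: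
  fixes x :: "'a::field poly"
  assumes "finite T" "\<forall>p\<in>T. monic_irreducible p" "\<forall>p\<in>T. p dvd x"
  shows "\<Prod>T dvd x"
  using assms
proof (induction T rule: finite_induct)
  case (insert p T)
  then obtain y where y: "x = \<Prod>T * y" by (auto elim: dvdE)
  have "prime_elem p"
    using insert.prems by (simp add: monic_irreducible_def field_poly_irreducible_imp_prime)
  moreover have "\<not> p dvd \<Prod>T"
    using insert.hyps insert.prems monic_irreducible_dvd_prod_iff[of T p] by simp
  moreover have "p dvd \<Prod>T * y" using insert.prems y by simp
  ultimately have "p dvd y" by (simp add: prime_elem_dvd_mult_iff)
  then have "p * \<Prod>T dvd \<Prod>T * y" by (simp add: mult.commute mult_dvd_mono)
  then show ?case using insert.hyps y by simp
qed simp

lemma lead_coeff_prod_monic_irreducibles: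
  "\<forall>p\<in>T. monic_irreducible p \<Longrightarrow> lead_coeff (\<Prod>T) = (1 :: 'a::field)"
  by (simp add: lead_coeff_prod monic_irreducible_def)

lemma degree_prod_monic_irreducibles:
  "\<forall>p\<in>T. monic_irreducible p \<Longrightarrow> degree (\<Prod>T :: 'a::field poly) = (\<Sum>p\<in>T. degree p)"
  by (rule degree_prod_eq_sum_degree) (auto simp: monic_irreducible_def)

lemma finite_monic_irreducible_dvd:
  fixes f :: "'a::{finite,field} poly"
  assumes "f \<noteq> 0"
  shows "finite {p. monic_irreducible p \<and> p dvd f}"
proof (rule finite_subset)
  show "{p. monic_irreducible p \<and> p dvd f} \<subseteq> {p. degree p < Suc (degree f)}"
    using assms by (auto dest: dvd_imp_degree_le)
qed (rule finite_degree_less)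

lemma squarefree_monic_eq_prod_irreducible_factors:
  fixes f :: "'a::{finite,field} poly"
  assumes monic: "lead_coeff f = 1" and sf: "squarefree f"
  shows "f = \<Prod>{p. monic_irreducible p \<and> p dvd f}"
proof -
  let ?T = "{p. monic_irreducible p \<and> p dvd f}"
  have "f \<noteq> 0" using monic by auto
  have fin: "finite ?T" by (rule finite_monic_irreducible_dvd[OF \<open>f \<noteq> 0\<close>])
  have "\<Prod>?T dvd f" by (rule prod_dvd_if_monic_irreducibles_dvd[OF fin]) auto
  then obtain h where h: "f = \<Prod>?T * h" by (rule dvdE)
  have "lead_coeff (\<Prod>?T * h) = lead_coeff (\<Prod>?T) * lead_coeff h"
    by (rule lead_coeff_mult)
  then have "lead_coeff h = 1"
    using monic lead_coeff_prod_monic_irreducibles[of ?T] by (simp add: h[symmetric])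
  have "degree h = 0"
  proof (rule ccontr)
    assume "degree h \<noteq> 0"
    then obtain p where p: "monic_irreducible p" "p dvd h" using ex_monic_irreducible_dvd by blast
    moreover have "h dvd f" by (subst h) simp
    ultimately have "p \<in> ?T" by (auto intro: dvd_trans)
    then have "p dvd \<Prod>?T" by (rule dvd_prodI[OF fin])
    then have "p * p dvd \<Prod>?T * h" using p(2) by (rule mult_dvd_mono)
    then have "p * p dvd f" by (simp add: h[symmetric])
    then have "is_unit p" using sf by (simp add: squarefree_def power2_eq_square)
    with p(1) show False by (simp add: monic_irreducible_def irreducible_not_unit)
  qed
  with \<open>lead_coeff h = 1\<close> have "h = 1" by (auto elim: degree_eq_zeroE)
  with h show ?thesis by simp
qed

lemma monic_irreducible_dvd_frobenius_poly_iff: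
  fixes p :: "'a::{finite,field} poly"
  assumes "monic_irreducible p"
  shows "p dvd frobenius_poly n \<longleftrightarrow> degree p dvd n"
  using assms by (simp add: monic_irreducible_def irreducible_frobenius_trivial_iff
      flip: frobenius_trivial_iff_dvd_frobenius_poly)

lemma frobenius_poly_eq_prod:
  assumes "n > 0"
  shows "frobenius_poly n = \<Prod>{p :: 'a::{finite,field} poly. monic_irreducible p \<and> degree p dvd n}"
proof -
  have factors: "{p. monic_irreducible p \<and> p dvd frobenius_poly n}
      = {p :: 'a poly. monic_irreducible p \<and> degree p dvd n}"
    using monic_irreducible_dvd_frobenius_poly_iff by blast
  show ?thesis
    using squarefree_monic_eq_prod_irreducible_factors[OF lead_coeff_frobenius_poly
        squarefree_frobenius_poly, OF assms assms] factors by metis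
qed

definition monic_irreducibles :: "nat \<Rightarrow> 'a::field poly set" where
  "monic_irreducibles d = {p. monic_irreducible p \<and> degree p = d}"

lemma finite_monic_irreducibles: "finite (monic_irreducibles d :: 'a::{finite,field} poly set)"
  by (rule finite_subset[OF _ finite_degree_less[of "Suc d"]]) (auto simp: monic_irreducibles_def)

lemma finite_monic_irreducibles_degree_dvd:
  assumes "n > 0"
  shows "finite {p :: 'a::{finite,field} poly. monic_irreducible p \<and> degree p dvd n}"
proof (rule finite_subset[OF _ finite_degree_less[of "Suc n"]])
  show "{p :: 'a poly. monic_irreducible p \<and> degree p dvd n} \<subseteq> {p. degree p < Suc n}"
    using assms by (auto dest: dvd_imp_le)
qed

lemma sum_degree_monic_irreducibles_degree_dvd:
  assumes "n > 0"
  shows "(\<Sum>p\<in>{p :: 'a::{finite,field} poly. monic_irreducible p \<and> degree p dvd n}. degree p)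
    = CARD('a) ^ n"
proof -
  have "CARD('a) ^ n = degree (frobenius_poly n :: 'a poly)"
    using assms by (simp add: degree_frobenius_poly)
  also have "\<dots> = (\<Sum>p\<in>{p :: 'a poly. monic_irreducible p \<and> degree p dvd n}. degree p)"
    using assms by (simp add: frobenius_poly_eq_prod degree_prod_monic_irreducibles)
  finally show ?thesis ..
qed

lemma sum_card_monic_irreducibles:
  assumes "n > 0"
  shows "(\<Sum>d | d dvd n. d * card (monic_irreducibles d :: 'a::{finite,field} poly set)) = CARD('a) ^ n"
proof -
  let ?S = "{p :: 'a poly. monic_irreducible p \<and> degree p dvd n}"
  have "(\<Sum>d | d dvd n. d * card (monic_irreducibles d :: 'a poly set))
      = (\<Sum>d | d dvd n. \<Sum>p\<in>(monic_irreducibles d :: 'a poly set). d)"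
    by (simp add: mult.commute)
  also have "\<dots> = (\<Sum>d | d dvd n. \<Sum>p\<in>{p \<in> ?S. degree p = d}. degree p)"
  proof (rule sum.cong)
    fix d assume "d \<in> {d. d dvd n}"
    then have "{p \<in> ?S. degree p = d} = monic_irreducibles d"
      by (auto simp: monic_irreducibles_def)
    then show "(\<Sum>p\<in>(monic_irreducibles d :: 'a poly set). d) = (\<Sum>p\<in>{p \<in> ?S. degree p = d}. degree p)"
      by (auto simp: monic_irreducibles_def intro: sum.cong)
  qed simp
  also have "\<dots> = (\<Sum>p\<in>?S. degree p)"
    using assms finite_monic_irreducibles_degree_dvd[OF assms] by (intro sum.group) auto
  also have "\<dots> = CARD('a) ^ n" by (rule sum_degree_monic_irreducibles_degree_dvd[OF assms])
  finally show ?thesis .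
qed

lemma monic_dvd_frobenius_poly_iff:
  fixes f :: "'a::{finite,field} poly"
  assumes monic: "lead_coeff f = 1" and "n > 0"
  shows "f dvd frobenius_poly n
    \<longleftrightarrow> (\<exists>T \<subseteq> {p. monic_irreducible p \<and> degree p dvd n}. f = \<Prod>T)"
proof
  assume dvd: "f dvd frobenius_poly n"
  then have "squarefree f" using squarefree_frobenius_poly[OF \<open>n > 0\<close>] by (rule squarefree_mono)
  then have "f = \<Prod>{p. monic_irreducible p \<and> p dvd f}"
    by (rule squarefree_monic_eq_prod_irreducible_factors[OF monic])
  moreover have "{p. monic_irreducible p \<and> p dvd f} \<subseteq> {p. monic_irreducible p \<and> degree p dvd n}"
    using dvd by (auto simp: monic_irreducible_dvd_frobenius_poly_iff[symmetric] intro: dvd_trans)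
  ultimately show "\<exists>T \<subseteq> {p. monic_irreducible p \<and> degree p dvd n}. f = \<Prod>T" by blast
next
  assume "\<exists>T \<subseteq> {p. monic_irreducible p \<and> degree p dvd n}. f = \<Prod>T"
  then obtain T where "T \<subseteq> {p. monic_irreducible p \<and> degree p dvd n}" "f = \<Prod>T" by blast
  moreover have "finite {p :: 'a poly. monic_irreducible p \<and> degree p dvd n}"
    by (rule finite_monic_irreducibles_degree_dvd[OF \<open>n > 0\<close>])
  ultimately show "f dvd frobenius_poly n"
    using \<open>n > 0\<close> by (simp add: frobenius_poly_eq_prod prod_dvd_prod_subset)
qed

lemma carmichael_poly_iff:
  fixes f :: "'a::{finite,field} poly"
  assumes "lead_coeff f = 1" "degree f = n" "n > 0"
  shows "carmichael_poly f \<longleftrightarrow> \<not> irreducible f \<and> f dvd frobenius_poly n"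
  using assms
  by (simp add: carmichael_poly_def quot_is_field_iff_irreducible quot_card_eq
      frobenius_trivial_def flip: frobenius_trivial_iff_dvd_frobenius_poly)

text \<open>The products of these sets are exactly the monic Carmichael polynomials of degree n:
  such a polynomial divides \<open>t\<^bsup>q\<^sup>n\<^esup> - t\<close>, hence is a product of distinct monic irreducibles
  of degrees dividing n, and it is reducible iff none of them has degree n.\<close>
definition carmichael_factor_sets :: "nat \<Rightarrow> 'a::field poly set set" where
  "carmichael_factor_sets n =
     {T. T \<subseteq> {p. monic_irreducible p \<and> degree p dvd n \<and> degree p < n} \<and> (\<Sum>p\<in>T. degree p) = n}"

lemma finite_carmichael_factor_set:
  assumes "T \<in> carmichael_factor_sets n"
  shows "finite (T :: 'a::{finite,field} poly set)"
proof (rule finite_subset[OF _ finite_degree_less[of n]])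
  show "T \<subseteq> {p. degree p < n}" using assms by (auto simp: carmichael_factor_sets_def)
qed


lemma carmichael_poly_prod_factor_set:
  fixes T :: "'a::{finite,field} poly set"
  assumes T: "T \<in> carmichael_factor_sets n" and "n > 0"
  shows "lead_coeff (\<Prod>T) = 1" "degree (\<Prod>T) = n" "carmichael_poly (\<Prod>T)"
proof -
  have fin: "finite T" using T by (rule finite_carmichael_factor_set)
  have mi: "\<forall>p\<in>T. monic_irreducible p" using T by (auto simp: carmichael_factor_sets_def)
  show monic: "lead_coeff (\<Prod>T) = 1" using mi by (rule lead_coeff_prod_monic_irreducibles)
  show deg: "degree (\<Prod>T) = n"
    using T mi by (simp add: degree_prod_monic_irreducibles carmichael_factor_sets_def)
  have "\<Prod>T dvd frobenius_poly n"
    using T monic \<open>n > 0\<close> monic_dvd_frobenius_poly_iff[OF monic \<open>n > 0\<close>]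
    by (auto simp: carmichael_factor_sets_def)
  moreover have "\<not> irreducible (\<Prod>T)"
  proof
    assume "irreducible (\<Prod>T)"
    then have "\<Prod>T \<in> T"
      using monic fin mi monic_irreducible_dvd_prod_iff[of T "\<Prod>T"] by (simp add: monic_irreducible_def)
    then show False using T deg by (auto simp: carmichael_factor_sets_def)
  qed
  ultimately show "carmichael_poly (\<Prod>T)"
    using monic deg \<open>n > 0\<close> by (simp add: carmichael_poly_iff)
qed

lemma carmichael_poly_imp_prod_factor_set:
  fixes f :: "'a::{finite,field} poly"
  assumes f: "lead_coeff f = 1" "degree f = n" "carmichael_poly f" and "n > 0"
  shows "\<exists>T \<in> carmichael_factor_sets n. f = \<Prod>T"
proof -
  have "\<not> irreducible f" "f dvd frobenius_poly n"
    using f \<open>n > 0\<close> by (simp_all add: carmichael_poly_iff)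
  then obtain T where T: "T \<subseteq> {p. monic_irreducible p \<and> degree p dvd n}" "f = \<Prod>T"
    using f(1) \<open>n > 0\<close> by (auto simp: monic_dvd_frobenius_poly_iff)
  have fin: "finite T"
    using finite_subset[OF T(1) finite_monic_irreducibles_degree_dvd[OF \<open>n > 0\<close>]] .
  have "degree p < n" if "p \<in> T" for p
  proof (rule ccontr)
    assume "\<not> degree p < n"
    moreover have "p dvd f" unfolding T(2) using fin that by (rule dvd_prodI)
    moreover have "monic_irreducible p" using T(1) that by blast
    ultimately have "p = f"
      using f(1,2) by (intro monic_dvd_imp_eq_if_degree_le) (auto simp: monic_irreducible_def)
    with \<open>\<not> irreducible f\<close> \<open>monic_irreducible p\<close> show False by (simp add: monic_irreducible_def)
  qed
  moreover have "\<forall>p\<in>T. monic_irreducible p" using T(1) by blast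
  then have "(\<Sum>p\<in>T. degree p) = n"
    using degree_prod_monic_irreducibles[of T] T(2) f(2) by simp
  ultimately have "T \<in> carmichael_factor_sets n"
    using T(1) by (auto simp: carmichael_factor_sets_def)
  with T(2) show ?thesis by blast
qed

lemma carmichael_count_eq_card_factor_sets:
  assumes "n > 0"
  shows "carmichael_count TYPE('a::{finite,field}) n = card (carmichael_factor_sets n :: 'a poly set set)"
proof -
  have "bij_betw Prod (carmichael_factor_sets n)
      {f :: 'a poly. lead_coeff f = 1 \<and> degree f = n \<and> carmichael_poly f}"
  proof (rule bij_betw_imageI)
    show "inj_on Prod (carmichael_factor_sets n :: 'a poly set set)"
    proof (rule inj_on_subset[OF inj_on_prod_monic_irreducibles], intro subsetI CollectI conjI)
      fix T :: "'a poly set" assume "T \<in> carmichael_factor_sets n"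
      then show "finite T" "\<forall>p\<in>T. monic_irreducible p"
        by (auto intro: finite_carmichael_factor_set simp: carmichael_factor_sets_def)
    qed
    show "Prod ` carmichael_factor_sets n = {f :: 'a poly. lead_coeff f = 1 \<and> degree f = n \<and> carmichael_poly f}"
    proof
      show "Prod ` carmichael_factor_sets n
          \<subseteq> {f :: 'a poly. lead_coeff f = 1 \<and> degree f = n \<and> carmichael_poly f}"
        using carmichael_poly_prod_factor_set[OF _ \<open>n > 0\<close>] by auto
      show "{f :: 'a poly. lead_coeff f = 1 \<and> degree f = n \<and> carmichael_poly f}
          \<subseteq> Prod ` carmichael_factor_sets n"
        using carmichael_poly_imp_prod_factor_set[OF _ _ _ \<open>n > 0\<close>] by blast
    qed
  qed
  then show ?thesis by (simp add: carmichael_count_def bij_betw_same_card)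
qed

lemma finite_carmichael_factor_sets:
  "finite (carmichael_factor_sets n :: 'a::{finite,field} poly set set)"
proof (rule finite_subset)
  show "carmichael_factor_sets n \<subseteq> Pow {p :: 'a poly. degree p < n}"
    by (auto simp: carmichael_factor_sets_def)
qed (simp add: finite_degree_less)

lemma card_monic_irreducibles_choose_le_carmichael_count:
  assumes "l \<ge> 2" "m > 0"
  shows "card (monic_irreducibles m :: 'a::{finite,field} poly set) choose l
    \<le> carmichael_count TYPE('a) (l * m)"
proof -
  have "{S. S \<subseteq> monic_irreducibles m \<and> card S = l} \<subseteq> (carmichael_factor_sets (l * m) :: 'a poly set set)"
  proof
    fix S :: "'a poly set" assume "S \<in> {S. S \<subseteq> monic_irreducibles m \<and> card S = l}"
    then have S: "S \<subseteq> monic_irreducibles m" "card S = l" by auto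
    then have "(\<Sum>p\<in>S. degree p) = l * m"
      by (subst sum.cong[OF refl, of _ _ "\<lambda>_. m"]) (auto simp: monic_irreducibles_def)
    moreover have "m < l * m" using assms by simp
    ultimately show "S \<in> carmichael_factor_sets (l * m)"
      using S(1) by (auto simp: carmichael_factor_sets_def monic_irreducibles_def)
  qed
  then have "card {S :: 'a poly set. S \<subseteq> monic_irreducibles m \<and> card S = l}
      \<le> card (carmichael_factor_sets (l * m) :: 'a poly set set)"
    by (rule card_mono[OF finite_carmichael_factor_sets])
  then show ?thesis
    using assms by (simp add: n_subsets finite_monic_irreducibles carmichael_count_eq_card_factor_sets)
qed

lemma mult_card_monic_irreducibles_le:
  assumes "m > 0"
  shows "m * card (monic_irreducibles m :: 'a::{finite,field} poly set) \<le> CARD('a) ^ m"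
  using member_le_sum[of m "{d. d dvd m}" "\<lambda>d. d * card (monic_irreducibles d :: 'a poly set)"]
    sum_card_monic_irreducibles[OF assms, where 'a='a] assms
  by simp

lemma card_monic_irreducibles_one: "card (monic_irreducibles 1 :: 'a::{finite,field} poly set) = CARD('a)"
  using sum_card_monic_irreducibles[of 1, where 'a='a] by simp

lemma card_monic_irreducibles_prime:
  assumes "prime p"
  shows "p * card (monic_irreducibles p :: 'a::{finite,field} poly set) + CARD('a) = CARD('a) ^ p"
proof -
  have "{d. d dvd p} = {1, p}" using assms by (auto simp: prime_nat_iff)
  moreover have "p \<noteq> 1" using assms by auto
  ultimately show ?thesis
    using sum_card_monic_irreducibles[of p, where 'a='a] prime_gt_0_nat[OF assms]
    by (simp add: card_monic_irreducibles_one[simplified])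
qed

lemma sum_powers_add_two_le:
  fixes q :: nat
  assumes "q \<ge> 2"
  shows "(\<Sum>d = 1..k. q ^ d) + 2 \<le> 2 * q ^ k"
proof (induction k)
  case (Suc k)
  have "2 * q ^ k \<le> q ^ Suc k" using mult_le_mono1[OF assms, of "q ^ k"] by simp
  moreover have "(\<Sum>d = 1..Suc k. q ^ d) = (\<Sum>d = 1..k. q ^ d) + q ^ Suc k" by simp
  ultimately show ?case using Suc.IH by linarith
qed simp

lemma proper_divisor_le_half:
  fixes d m :: nat
  assumes "d dvd m" "d \<noteq> m" "m > 0"
  shows "d \<le> m div 2"
proof -
  obtain e where e: "m = d * e" using assms(1) by (rule dvdE)
  with assms(2,3) have "e \<ge> 2" by (cases e) auto
  then have "d * 2 \<le> m" using e by simp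
  then show ?thesis by linarith
qed

lemma card_monic_irreducibles_lower_bound:
  assumes "m \<ge> 2"
  shows "CARD('a::{finite,field}) ^ m + 2
    \<le> m * card (monic_irreducibles m :: 'a poly set) + 2 * CARD('a) ^ (m div 2)"
proof -
  let ?q = "CARD('a)" and ?I = "\<lambda>d. card (monic_irreducibles d :: 'a poly set)"
  have m: "m > 0" "finite {d. d dvd m}" using assms by simp_all
  have "?q ^ m = (\<Sum>d | d dvd m. d * ?I d)"
    using sum_card_monic_irreducibles[OF m(1), where 'a='a] by simp
  also have "\<dots> = m * ?I m + (\<Sum>d \<in> {d. d dvd m} - {m}. d * ?I d)"
    using m by (subst sum.remove[of _ m]) auto
  also have "(\<Sum>d \<in> {d. d dvd m} - {m}. d * ?I d) \<le> (\<Sum>d \<in> {d. d dvd m} - {m}. ?q ^ d)"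
    using m by (intro sum_mono mult_card_monic_irreducibles_le) (auto intro: Nat.gr0I)
  also have "\<dots> \<le> (\<Sum>d = 1..m div 2. ?q ^ d)"
  proof (rule sum_mono2)
    show "{d. d dvd m} - {m} \<subseteq> {1..m div 2}"
    proof
      fix d assume "d \<in> {d. d dvd m} - {m}"
      then have "d dvd m" "d \<noteq> m" by auto
      then show "d \<in> {1..m div 2}"
        using m(1) proper_divisor_le_half[of d m] dvd_pos_nat[of m d] by simp
    qed
  qed simp_all
  finally have "?q ^ m \<le> m * ?I m + (\<Sum>d = 1..m div 2. ?q ^ d)" by simp
  then show ?thesis using sum_powers_add_two_le[OF two_le_card_field[where 'a='a], of "m div 2"] by linarith
qed

lemma four_mult_power_half_le:
  fixes q m :: nat
  assumes "q > 0"
  shows "4 * q ^ (m div 2) \<le> q ^ m + 4"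
proof -
  let ?x = "q ^ (m div 2)"
  have "?x ^ 2 \<le> q ^ m"
    using assms by (simp flip: power_mult) (rule power_increasing, simp_all)
  moreover have "(0::int) \<le> (int ?x - 2) ^ 2" by simp
  then have "int (4 * ?x) \<le> int (?x ^ 2 + 4)" by (simp add: power2_eq_square algebra_simps)
  ultimately show ?thesis by linarith
qed

lemma card_monic_irreducibles_ge:
  assumes "m \<ge> 2"
  shows "CARD('a::{finite,field}) ^ m \<le> 2 * m * card (monic_irreducibles m :: 'a poly set)"
  using card_monic_irreducibles_lower_bound[OF assms, where 'a='a]
    four_mult_power_half_le[of "CARD('a)" m] by simp

lemma twice_square_less_power_two:
  fixes m :: nat
  assumes "m \<ge> 7"
  shows "2 * m ^ 2 < 2 ^ m"
  using assms
proof (induction m rule: nat_induct_at_least)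
  case (Suc m)
  have "7 * m \<le> m * m" using Suc.hyps by (intro mult_le_mono1)
  moreover have "2 * Suc m ^ 2 = 2 * (m * m) + 4 * m + 2" "(2::nat) ^ Suc m = 2 * 2 ^ m"
    by (simp_all add: power2_eq_square)
  ultimately show ?case using Suc.IH Suc.hyps by (simp only: power2_eq_square)
qed simp

lemma few_irreducibles_cases:
  fixes q m l :: nat
  assumes q: "q \<ge> 2" and m: "m \<ge> 2" and l: "prime l" "l \<le> m" "even m \<Longrightarrow> l = 2"
    and ineq: "q ^ m + 2 \<le> m * l + 2 * q ^ (m div 2)"
  shows "q = 2 \<and> (m, l) \<in> {(2, 2), (3, 2), (3, 3)}"
proof -
  have "l \<ge> 2" using l(1) by (rule prime_ge_2_nat)
  consider "m = 2" | "m = 3" | "m \<ge> 4" using m by linarith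
  then show ?thesis
  proof cases
    case 1
    have "q \<le> 2"
    proof (rule ccontr)
      assume "\<not> q \<le> 2"
      then have "3 * q \<le> q * q" by (intro mult_le_mono1) simp
      moreover have "q * q + 2 \<le> 4 + 2 * q" using ineq l(3) 1 by (simp add: power2_eq_square)
      ultimately show False using \<open>\<not> q \<le> 2\<close> by linarith
    qed
    then show ?thesis using q l(3) 1 by simp
  next
    case 2
    have "q \<le> 2"
    proof (rule ccontr)
      assume "\<not> q \<le> 2"
      then have "9 * q \<le> q * q * q" using mult_le_mono[of 3 q 3 q] by (intro mult_le_mono1) simp
      moreover have "q * q * q + 2 \<le> 9 + 2 * q" using ineq l(2) 2 by (simp add: power3_eq_cube)
      ultimately show False using \<open>\<not> q \<le> 2\<close> by linarith
    qed
    moreover have "l = 2 \<or> l = 3" using \<open>l \<ge> 2\<close> l(2) 2 by linarith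
    ultimately show ?thesis using q 2 by auto
  next
    case 3
    have "4 * q ^ (m div 2) \<le> q ^ m + 4" using q by (intro four_mult_power_half_le) simp
    then have "q ^ m \<le> 2 * (m * l)" using ineq by linarith
    also have "m * l \<le> m * m" using l(2) by simp
    finally have small: "q ^ m \<le> 2 * m ^ 2" by (simp add: power2_eq_square)
    moreover have "2 ^ m \<le> q ^ m" using q by (simp add: power_mono)
    ultimately have "m \<le> 6" using twice_square_less_power_two[of m] by linarith
    have "q \<le> 2"
    proof (rule ccontr)
      assume "\<not> q \<le> 2"
      then have "3 ^ m \<le> q ^ m" by (simp add: power_mono)
      moreover have "3 ^ 4 \<le> (3::nat) ^ m" using 3 by (intro power_increasing) auto
      moreover have "2 * m ^ 2 \<le> 72" using \<open>m \<le> 6\<close> power_mono[of m 6 2] by simp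
      ultimately show False using small by simp
    qed
    then have "q = 2" using q by simp
    moreover have "m = 4 \<or> m = 5 \<or> m = 6" using 3 \<open>m \<le> 6\<close> by auto
    ultimately have False using ineq l(2,3) by auto
    then show ?thesis ..
  qed
qed

lemma proper_divisor_of_prime_square_iff:
  fixes p d :: nat
  assumes "prime p"
  shows "d dvd p ^ 2 \<and> d < p ^ 2 \<longleftrightarrow> d dvd p"
proof
  assume d: "d dvd p ^ 2 \<and> d < p ^ 2"
  then obtain i where "i \<le> 2" "d = p ^ i" using divides_primepow[OF assms] by auto
  with d have "i < 2" using prime_gt_1_nat[OF assms] by (simp add: power_strict_increasing_iff)
  with \<open>d = p ^ i\<close> show "d dvd p" by (cases i) auto
next
  assume "d dvd p"
  then have "d \<le> p" using prime_gt_0_nat[OF assms] by (rule dvd_imp_le)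
  moreover have "p < p * p" using prime_gt_1_nat[OF assms] by simp
  ultimately have "d < p * p" by linarith
  with \<open>d dvd p\<close> show "d dvd p ^ 2 \<and> d < p ^ 2" by (simp add: power2_eq_square)
qed

lemma carmichael_factor_sets_prime_square:
  assumes "prime p"
  shows "carmichael_factor_sets (p ^ 2) = {T :: 'a::field poly set.
    T \<subseteq> {q. monic_irreducible q \<and> degree q dvd p} \<and> (\<Sum>q\<in>T. degree q) = p ^ 2}"
  using proper_divisor_of_prime_square_iff[OF assms]
  by (auto simp: carmichael_factor_sets_def)

lemma carmichael_count_prime_square:
  assumes "prime p"
  shows "CARD('a) ^ p < p ^ 2 \<Longrightarrow> carmichael_count TYPE('a::{finite,field}) (p ^ 2) = 0"
    and "CARD('a) ^ p = p ^ 2 \<Longrightarrow> carmichael_count TYPE('a::{finite,field}) (p ^ 2) = 1"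
proof -
  let ?S = "{q :: 'a poly. monic_irreducible q \<and> degree q dvd p}"
  have p: "p > 0" using prime_gt_0_nat[OF assms] .
  have fin: "finite ?S" by (rule finite_monic_irreducibles_degree_dvd[OF p])
  have total: "(\<Sum>q\<in>?S. degree q) = CARD('a) ^ p"
    by (rule sum_degree_monic_irreducibles_degree_dvd[OF p])
  have le: "(\<Sum>q\<in>T. degree q) \<le> CARD('a) ^ p" if "T \<subseteq> ?S" for T
    using sum_mono2[OF fin that, of degree] total by simp
  have count: "carmichael_count TYPE('a) (p ^ 2)
      = card {T. T \<subseteq> ?S \<and> (\<Sum>q\<in>T. degree q) = p ^ 2}"
    using p by (simp add: carmichael_count_eq_card_factor_sets carmichael_factor_sets_prime_square[OF assms])
  show "carmichael_count TYPE('a) (p ^ 2) = 0" if "CARD('a) ^ p < p ^ 2"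
  proof -
    have "\<not> (T \<subseteq> ?S \<and> (\<Sum>q\<in>T. degree q) = p ^ 2)" for T
      using le[of T] that by linarith
    then have empty: "{T. T \<subseteq> ?S \<and> (\<Sum>q\<in>T. degree q) = p ^ 2} = {}" by blast
    show ?thesis unfolding count empty by simp
  qed
  show "carmichael_count TYPE('a) (p ^ 2) = 1" if "CARD('a) ^ p = p ^ 2"
  proof -
    have "T = ?S" if T: "T \<subseteq> ?S" "(\<Sum>q\<in>T. degree q) = p ^ 2" for T
    proof (rule ccontr)
      assume "T \<noteq> ?S"
      then obtain r where r: "r \<in> ?S - T" using T(1) by blast
      then have "degree r > 0" by (auto simp: monic_irreducible_def irreducible_imp_degree_pos)
      moreover have "(\<Sum>q\<in>?S. degree q) = (\<Sum>q\<in>T. degree q) + (\<Sum>q\<in>?S - T. degree q)"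
        using sum.subset_diff[OF T(1) fin, of degree] by simp
      moreover have "degree r \<le> (\<Sum>q\<in>?S - T. degree q)"
        using r fin by (intro member_le_sum) auto
      ultimately show False using T(2) total \<open>CARD('a) ^ p = p ^ 2\<close> by linarith
    qed
    then have "{T. T \<subseteq> ?S \<and> (\<Sum>q\<in>T. degree q) = p ^ 2} = {?S}"
      using total \<open>CARD('a) ^ p = p ^ 2\<close> by auto
    then show ?thesis by (simp add: count)
  qed
qed

lemma two_le_carmichael_count_six:
  assumes "CARD('a::{finite,field}) = 2"
  shows "carmichael_count TYPE('a) 6 \<ge> 2"
proof -
  have I: "card (monic_irreducibles 1 :: 'a poly set) = 2"
    "card (monic_irreducibles 2 :: 'a poly set) = 1"
    "card (monic_irreducibles 3 :: 'a poly set) = 2"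
    using assms card_monic_irreducibles_one[where 'a='a]
      card_monic_irreducibles_prime[of 2, where 'a='a] card_monic_irreducibles_prime[of 3, where 'a='a]
    by simp_all
  have "monic_irreducibles 2 \<noteq> ({} :: 'a poly set)" "monic_irreducibles 3 \<noteq> ({} :: 'a poly set)"
    using I(2,3) by auto
  then obtain P2 P3 :: "'a poly" where P: "P2 \<in> monic_irreducibles 2" "P3 \<in> monic_irreducibles 3"
    by blast
  let ?T = "\<lambda>a. {a, P2, P3}"
  have "?T a \<in> carmichael_factor_sets 6" if "a \<in> monic_irreducibles 1" for a
  proof -
    have deg: "degree a = 1" "degree P2 = 2" "degree P3 = 3"
      using that P by (auto simp: monic_irreducibles_def)
    then have "a \<noteq> P2" "a \<noteq> P3" "P2 \<noteq> P3" by auto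
    then have "(\<Sum>q\<in>?T a. degree q) = 6" using deg by simp
    then show ?thesis using that P deg by (auto simp: carmichael_factor_sets_def monic_irreducibles_def)
  qed
  then have "?T ` monic_irreducibles 1 \<subseteq> carmichael_factor_sets 6" by blast
  moreover have "inj_on ?T (monic_irreducibles 1)"
  proof (rule inj_onI)
    fix a b assume "a \<in> monic_irreducibles 1" "b \<in> monic_irreducibles 1" "?T a = ?T b"
    moreover from this have "a \<noteq> P2" "a \<noteq> P3" using P by (auto simp: monic_irreducibles_def)
    ultimately show "a = b" by (metis insert_iff singletonD)
  qed
  ultimately have "card (monic_irreducibles 1 :: 'a poly set) \<le> card (carmichael_factor_sets 6 :: 'a poly set set)"
    using card_inj_on_le[OF _ _ finite_carmichael_factor_sets] by blast
  then show ?thesis using I(1) by (simp add: carmichael_count_eq_card_factor_sets)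
qed

lemma carmichael_count_ge_power:
  assumes "l \<ge> 2" "m > 0" "l \<le> card (monic_irreducibles m :: 'a::{finite,field} poly set)"
  shows "(real (card (monic_irreducibles m :: 'a poly set)) / real l) ^ l
    \<le> real (carmichael_count TYPE('a) (l * m))"
  using binomial_ge_n_over_k_pow_k[OF assms(3), where 'a=real]
    card_monic_irreducibles_choose_le_carmichael_count[OF assms(1,2), where 'a='a]
  by linarith

lemma power_card_div_le_power:
  assumes "m \<ge> 2" "l > 0"
  shows "real CARD('a::{finite,field}) ^ (l * m) / (2 * real (l * m)) ^ l
    \<le> (real (card (monic_irreducibles m :: 'a poly set)) / real l) ^ l"
proof -
  have "real (CARD('a) ^ m) \<le> real (2 * m * card (monic_irreducibles m :: 'a poly set))"
    using card_monic_irreducibles_ge[OF assms(1), where 'a='a] by (simp only: of_nat_le_iff)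
  then have "real CARD('a) ^ m \<le> 2 * real m * real (card (monic_irreducibles m :: 'a poly set))"
    by simp
  then have "real CARD('a) ^ m / (2 * real m * real l)
      \<le> real (card (monic_irreducibles m :: 'a poly set)) / real l"
    using assms by (simp add: divide_simps mult_ac)
  then have "(real CARD('a) ^ m / (2 * real m * real l)) ^ l
      \<le> (real (card (monic_irreducibles m :: 'a poly set)) / real l) ^ l"
    by (rule power_mono) simp
  moreover have "real CARD('a) ^ (l * m) / (2 * real (l * m)) ^ l
      = (real CARD('a) ^ m / (2 * real m * real l)) ^ l"
    by (simp add: power_divide mult_ac flip: power_mult)
  ultimately show ?thesis by simp
qed

lemma smallest_prime_factor_cofactor:
  fixes n l :: nat
  assumes "n > 1" "\<not> prime n" "prime l" "l dvd n" and least: "\<forall>p. prime p \<and> p dvd n \<longrightarrow> l \<le> p"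
  obtains m where "n = l * m" "l \<le> m" "even m \<Longrightarrow> l = 2"
proof -
  obtain m where n: "n = l * m" using assms(4) by (rule dvdE)
  have "m \<noteq> 1" using n assms(2,3) by auto
  then obtain r where r: "prime r" "r dvd m" using prime_factor_nat by blast
  have "m > 0" using n assms(1) by (cases m) auto
  then have "r \<le> m" using r(2) by (rule dvd_imp_le[rotated])
  moreover have "l \<le> r" using least r n by auto
  ultimately have "l \<le> m" by simp
  moreover have "l = 2" if "even m"
  proof -
    have "2 dvd n" using that n by simp
    then have "l \<le> 2" using least by auto
    then show ?thesis using prime_ge_2_nat[OF assms(3)] by simp
  qed
  ultimately show thesis using n that by blast
qed

lemma carmichael_count_many_irreducibles:
  assumes "l \<ge> 2" "m \<ge> 2" "l < card (monic_irreducibles m :: 'a::{finite,field} poly set)"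
  shows "2 \<le> carmichael_count TYPE('a) (l * m)"
    and "real CARD('a) ^ (l * m) / (2 * real (l * m)) ^ l \<le> real (carmichael_count TYPE('a) (l * m))"
proof -
  let ?I = "card (monic_irreducibles m :: 'a poly set)"
  have "(real ?I / real l) ^ l \<le> real (carmichael_count TYPE('a) (l * m))"
    using carmichael_count_ge_power[of l m, where 'a='a] assms by simp
  moreover have "1 < (real ?I / real l) ^ l" using assms(1,3) by (intro one_less_power) auto
  moreover have "real CARD('a) ^ (l * m) / (2 * real (l * m)) ^ l \<le> (real ?I / real l) ^ l"
    using power_card_div_le_power[OF assms(2), of l, where 'a='a] assms(1) by simp
  ultimately show "2 \<le> carmichael_count TYPE('a) (l * m)"
    and "real CARD('a) ^ (l * m) / (2 * real (l * m)) ^ l \<le> real (carmichael_count TYPE('a) (l * m))"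
    by linarith+
qed

lemma few_monic_irreducibles_cases:
  assumes "m \<ge> 2" "prime l" "l \<le> m" "even m \<Longrightarrow> l = 2"
    and "card (monic_irreducibles m :: 'a::{finite,field} poly set) \<le> l"
  shows "CARD('a) = 2 \<and> (m, l) \<in> {(2, 2), (3, 2), (3, 3)}"
proof (rule few_irreducibles_cases[OF two_le_card_field assms(1-4)])
  have "m * card (monic_irreducibles m :: 'a poly set) \<le> m * l" using assms(5) by simp
  then show "CARD('a) ^ m + 2 \<le> m * l + 2 * CARD('a) ^ (m div 2)"
    using card_monic_irreducibles_lower_bound[OF assms(1), where 'a='a] by linarith
qed

theorem theorem4p5:
  fixes n l q :: nat
  assumes "q = card (UNIV :: 'a::{finite,field} set)"
    and "n > 1" and "\<not> prime n"
    and "prime l" and "l dvd n" and "\<forall>p. prime p \<and> p dvd n \<longrightarrow> l \<le> p"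
  shows "(carmichael_count TYPE('a) n = 0 \<longleftrightarrow> (q, n) = (2, 9))
    \<and> ((q, n) \<noteq> (2, 9) \<longrightarrow>
         (carmichael_count TYPE('a) n = 1 \<longleftrightarrow> (q, n) = (2, 4))
         \<and> real (carmichael_count TYPE('a) n) \<ge> real q ^ n / (2 * real n) ^ l)"
proof -
  obtain m where n: "n = l * m" and "l \<le> m" and l_even: "even m \<Longrightarrow> l = 2"
    using smallest_prime_factor_cofactor[OF assms(2-6)] by blast
  have "l \<ge> 2" using assms(4) by (rule prime_ge_2_nat)
  with \<open>l \<le> m\<close> have "m \<ge> 2" by simp
  have C_9: "q = 2 \<Longrightarrow> carmichael_count TYPE('a) 9 = 0"
    using carmichael_count_prime_square(1)[of 3, where 'a='a] assms(1) by simp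
  have C_4: "q = 2 \<Longrightarrow> carmichael_count TYPE('a) 4 = 1"
    using carmichael_count_prime_square(2)[of 2, where 'a='a] assms(1) by simp
  show ?thesis
  proof (cases "l < card (monic_irreducibles m :: 'a poly set)")
    case True
    then show ?thesis
      using carmichael_count_many_irreducibles[OF \<open>l \<ge> 2\<close> \<open>m \<ge> 2\<close>, where 'a='a] n assms(1) C_4 C_9
      by auto
  next
    case False
    then have "q = 2" "(m, l) \<in> {(2, 2), (3, 2), (3, 3)}"
      using few_monic_irreducibles_cases[OF \<open>m \<ge> 2\<close> assms(4) \<open>l \<le> m\<close> l_even, where 'a='a] assms(1)
      by auto
    then consider "n = 4" "l = 2" | "n = 6" "l = 2" | "n = 9" using n by auto
    then show ?thesis
    proof cases
      case 1
      then show ?thesis using C_4 \<open>q = 2\<close> by simp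
    next
      case 2
      then show ?thesis using two_le_carmichael_count_six[where 'a='a] \<open>q = 2\<close> assms(1) by simp
    next
      case 3
      then show ?thesis using C_9 \<open>q = 2\<close> by simp
    qed
  qed
qed

end
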